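(* Let $G=(V,E)$ be a simple undirected graph with $V=[n]$ and let $k\ge 1$ be an integer. The problem $$\max_{Z\in\mathbb S^n,\;X\in\mathbb R^{n\times k}} \langle I,Z\rangle \ \text{ s.t. } Z_{ij}=0\ (\{i,j\}\in E),\ Z_{ii}\le 1\ (i\in[n]),\ Z_{ii}=\sum_{r\in[k]}X_{ir}\ (i\in[n]),\ Z\ge0,\ X\ge 0,\ \begin{bmatrix}I_k&X^{\top}\\ X&Z\end{bmatrix}\succeq0$$ is equivalent to (has the same optimal value as) the problem $$\theta^3_k(G)=\max_{Z\in\mathbb S^n}\langle I,Z\rangle \ \text{ s.t. } Z_{ij}=0\ (\{i,j\}\in E),\ Z_{ii}\le 1\ (i\in[n]),\ Z\ge 0,\ \begin{bmatrix}k&\mathrm{diag}(Z)^{\top}\\ \mathrm{diag}(Z)&Z\end{bmatrix}\succeq 0,$$ and the latter problem is strictly feasible.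
   Context: $\mathbb S^n$ is the space of real symmetric $n\times n$ matrices; $\langle A,B\rangle=\mathrm{trace}(AB)$; $\mathrm{diag}(Z)$ is the vector of diagonal entries of $Z$; $\ge 0$ denotes entrywise nonnegativity and $\succeq0$ positive semidefiniteness. Strict feasibility means there is a feasible $Z$ for which the matrix in the semidefinite constraint is positive definite. *)

theory Defs
  imports "HOL-Analysis.Analysis"
begin

definition psd :: "real^'m^'m \<Rightarrow> bool" where
  "psd M \<longleftrightarrow> transpose M = M \<and> (\<forall>x. 0 \<le> x \<bullet> (M *v x))"

definition pd :: "real^'m^'m \<Rightarrow> bool" where
  "pd M \<longleftrightarrow> transpose M = M \<and> (\<forall>x. x \<noteq> 0 \<longrightarrow> 0 < x \<bullet> (M *v x))"

definition blockIX :: "real^'k^'n \<Rightarrow> real^'n^'n \<Rightarrow> real^('k + 'n)^('k + 'n)" where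
  "blockIX X Z = (\<chi> p q. case (p, q) of
      (Inl a, Inl b) \<Rightarrow> (if a = b then 1 else 0)
    | (Inl a, Inr j) \<Rightarrow> X $ j $ a
    | (Inr i, Inl b) \<Rightarrow> X $ i $ b
    | (Inr i, Inr j) \<Rightarrow> Z $ i $ j)"

definition blockKD :: "real \<Rightarrow> real^'n^'n \<Rightarrow> real^(unit + 'n)^(unit + 'n)" where
  "blockKD k Z = (\<chi> p q. case (p, q) of
      (Inl _, Inl _) \<Rightarrow> k
    | (Inl _, Inr j) \<Rightarrow> Z $ j $ j
    | (Inr i, Inl _) \<Rightarrow> Z $ i $ i
    | (Inr i, Inr j) \<Rightarrow> Z $ i $ j)"

text \<open>Feasible set of the lifted problem (with the n x k matrix X); k = CARD('k).\<close>
definition feasX :: "('n::finite \<Rightarrow> 'n \<Rightarrow> bool) \<Rightarrow> ((real^'n^'n) \<times> (real^'k::finite^'n)) set" where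
  "feasX E = {(Z, X). transpose Z = (Z::real^'n^'n)
      \<and> (\<forall>i j. E i j \<longrightarrow> Z $ i $ j = 0)
      \<and> (\<forall>i. Z $ i $ i \<le> 1)
      \<and> (\<forall>i. Z $ i $ i = (\<Sum>r\<in>UNIV. (X::real^'k^'n) $ i $ r))
      \<and> (\<forall>i j. 0 \<le> Z $ i $ j)
      \<and> (\<forall>i r. 0 \<le> X $ i $ r)
      \<and> psd (blockIX X Z)}"

definition feas3 :: "('n::finite \<Rightarrow> 'n \<Rightarrow> bool) \<Rightarrow> real \<Rightarrow> (real^'n^'n) set" where
  "feas3 E k = {Z. transpose Z = Z
      \<and> (\<forall>i j. E i j \<longrightarrow> Z $ i $ j = 0)
      \<and> (\<forall>i. Z $ i $ i \<le> 1)
      \<and> (\<forall>i j. 0 \<le> Z $ i $ j)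
      \<and> psd (blockKD k Z)}"

definition optX :: "('n::finite \<Rightarrow> 'n \<Rightarrow> bool) \<Rightarrow> 'k::finite itself \<Rightarrow> real" where
  "optX E (_::'k itself) = Sup ((\<lambda>(Z, X::real^'k^'n). trace Z) ` feasX E)"

definition theta3 :: "('n::finite \<Rightarrow> 'n \<Rightarrow> bool) \<Rightarrow> real \<Rightarrow> real" where
  "theta3 E k = Sup (trace ` feas3 E k)"

end

theory Submission
  imports Defs
begin

text \<open>
  Testing the block matrix [I, X^T; X, Z] against a vector (y, z) gives
  y^T y + 2 z^T X y + z^T Z z, and testing [k, diag(Z)^T; diag(Z), Z] against (t, z) gives
  k t^2 + 2 t diag(Z)^T z + z^T Z z. When the rows of X sum to diag(Z), the choice y = t 1
  turns the first form into the second, so Z is feasible for theta^3_k whenever (Z, X) is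
  feasible for the lifted problem. Conversely, for X = diag(Z) 1^T / k one has
  X y = (1^T y / k) diag(Z), and Cauchy-Schwarz, y^T y >= (1^T y)^2 / k, bounds the first form
  from below by the second at t = 1^T y / k. For strict feasibility take Z = e I with e = k / (k + n): the second
  form becomes e sum_i (z_i + t)^2 + k^2 / (k + n) t^2.
\<close>

definition vec_join :: "'a^'m \<Rightarrow> 'a^'n \<Rightarrow> 'a^('m + 'n)" where
  "vec_join y z = (\<chi> p. case p of Inl a \<Rightarrow> y $ a | Inr i \<Rightarrow> z $ i)"

definition diag_vec :: "'a^'n^'n \<Rightarrow> 'a^'n" where
  "diag_vec Z = (\<chi> i. Z $ i $ i)"

lemma vec_join_nth [simp]:
  "vec_join y z $ Inl a = y $ a" "vec_join y z $ Inr i = z $ i"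
  by (simp_all add: vec_join_def)

lemma vec_join_cases:
  obtains y z where "x = vec_join y z"
proof
  show "x = vec_join (\<chi> a. x $ Inl a) (\<chi> i. x $ Inr i)"
    by (simp add: vec_eq_iff vec_join_def split: sum.split)
qed

lemma vec_join_eq_0_iff [simp]: "vec_join y z = 0 \<longleftrightarrow> y = 0 \<and> z = 0"
  by (auto simp: vec_eq_iff vec_join_def split: sum.split)

lemma sum_UNIV_Plus:
  "sum f (UNIV :: ('a::finite + 'b::finite) set) = (\<Sum>a\<in>UNIV. f (Inl a)) + (\<Sum>b\<in>UNIV. f (Inr b))"
  by (simp flip: UNIV_Plus_UNIV add: sum.Plus o_def)

lemma quadratic_form_blockIX:
  fixes X :: "real^'k::finite^'n::finite"
  shows "vec_join y z \<bullet> (blockIX X Z *v vec_join y z)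
    = y \<bullet> y + 2 * (z \<bullet> (X *v y)) + z \<bullet> (Z *v z)"
  unfolding inner_vec_def matrix_vector_mult_def blockIX_def
  by (simp add: sum_UNIV_Plus sum_distrib_left sum_distrib_right algebra_simps
      sum.distrib if_distrib cong: if_cong)
    (subst sum.swap, simp add: algebra_simps sum_distrib_left)

lemma quadratic_form_blockKD:
  fixes Z :: "real^'n::finite^'n"
  shows "vec_join (\<chi> _. t) z \<bullet> (blockKD k Z *v vec_join (\<chi> _. t) z)
    = k * t\<^sup>2 + 2 * t * (diag_vec Z \<bullet> z) + z \<bullet> (Z *v z)"
  unfolding inner_vec_def matrix_vector_mult_def blockKD_def diag_vec_def
  by (simp add: sum_UNIV_Plus sum_distrib_left sum_distrib_right algebra_simps
      power2_eq_square sum.distrib UNIV_unit)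

lemma all_vec_join: "(\<forall>x. P x) \<longleftrightarrow> (\<forall>y z. P (vec_join y z))"
  by (metis vec_join_cases)

lemma all_vec_unit: "(\<forall>y :: 'a^unit. P y) \<longleftrightarrow> (\<forall>t. P (\<chi> _. t))"
  by (metis (full_types) old.unit.exhaust vec_eq_iff vec_lambda_beta)

lemma transpose_blockIX: "transpose Z = Z \<Longrightarrow> transpose (blockIX X Z) = blockIX X Z"
  unfolding transpose_def blockIX_def vec_eq_iff by (auto split: sum.splits)

lemma transpose_blockKD: "transpose Z = Z \<Longrightarrow> transpose (blockKD k Z) = blockKD k Z"
  unfolding transpose_def blockKD_def vec_eq_iff by (auto split: sum.splits)

lemma pd_imp_psd: "pd M \<Longrightarrow> psd M"
  unfolding pd_def psd_def by (metis inner_zero_left order.order_iff_strict)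

lemma psd_blockIX_iff:
  fixes X :: "real^'k::finite^'n::finite"
  assumes "transpose Z = Z"
  shows "psd (blockIX X Z) \<longleftrightarrow> (\<forall>y z. 0 \<le> y \<bullet> y + 2 * (z \<bullet> (X *v y)) + z \<bullet> (Z *v z))"
  unfolding psd_def all_vec_join[where P = "\<lambda>x. 0 \<le> x \<bullet> (blockIX X Z *v x)"]
  by (simp add: transpose_blockIX assms quadratic_form_blockIX)

lemma psd_blockKD_iff:
  fixes Z :: "real^'n::finite^'n"
  assumes "transpose Z = Z"
  shows "psd (blockKD k Z) \<longleftrightarrow> (\<forall>t z. 0 \<le> k * t\<^sup>2 + 2 * t * (diag_vec Z \<bullet> z) + z \<bullet> (Z *v z))"
  unfolding psd_def all_vec_join[where P = "\<lambda>x. 0 \<le> x \<bullet> (blockKD k Z *v x)"] all_vec_unit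
  by (simp add: transpose_blockKD assms quadratic_form_blockKD)

lemma pd_blockKD_iff:
  fixes Z :: "real^'n::finite^'n"
  assumes "transpose Z = Z"
  shows "pd (blockKD k Z) \<longleftrightarrow>
    (\<forall>t z. t \<noteq> 0 \<or> z \<noteq> 0 \<longrightarrow> 0 < k * t\<^sup>2 + 2 * t * (diag_vec Z \<bullet> z) + z \<bullet> (Z *v z))"
proof -
  have "(\<chi> _. t) = (0 :: real^unit) \<longleftrightarrow> t = 0" for t
    by (simp add: vec_eq_iff)
  then show ?thesis
    unfolding pd_def all_vec_join[where P = "\<lambda>x. x \<noteq> 0 \<longrightarrow> 0 < x \<bullet> (blockKD k Z *v x)"]
      all_vec_unit
    by (simp add: transpose_blockKD assms quadratic_form_blockKD)
qed

lemma feasX_imp_feas3: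
  fixes X :: "real^'k::finite^'n::finite"
  assumes "(Z, X) \<in> feasX E"
  shows "Z \<in> feas3 E (real CARD('k))"
proof -
  have sym: "transpose Z = Z" and psd_IX: "psd (blockIX X Z)"
    and row_sums: "\<And>i. (\<Sum>r\<in>UNIV. X $ i $ r) = Z $ i $ i"
    using assms unfolding feasX_def by auto
  have "0 \<le> real CARD('k) * t\<^sup>2 + 2 * t * (diag_vec Z \<bullet> z) + z \<bullet> (Z *v z)" for t z
  proof -
    have "X *v (\<chi> _. t) = t *\<^sub>R diag_vec Z"
      by (simp add: vec_eq_iff matrix_vector_mult_def diag_vec_def
          flip: sum_distrib_right row_sums)
    moreover have "(\<chi> _. t) \<bullet> (\<chi> _. t :: real^'k) = real CARD('k) * t\<^sup>2"
      by (simp add: inner_vec_def power2_eq_square)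
    ultimately show ?thesis
      using psd_IX[unfolded psd_blockIX_iff[OF sym], rule_format, of "\<chi> _. t" z]
      by (simp add: inner_commute)
  qed
  then have "psd (blockKD (real CARD('k)) Z)"
    using psd_blockKD_iff[OF sym] by blast
  then show ?thesis
    using assms unfolding feasX_def feas3_def by auto
qed

lemma feas3_imp_feasX:
  assumes "Z \<in> feas3 E (real CARD('k::finite))"
  shows "(Z, \<chi> i r. Z $ i $ i / real CARD('k) :: real^'k^'n::finite) \<in> feasX E"
proof -
  define K where "K = real CARD('k)"
  define X :: "real^'k^'n" where "X = (\<chi> i r. Z $ i $ i / K)"
  have K: "K > 0" unfolding K_def by simp
  have sym: "transpose Z = Z" and psd_KD: "psd (blockKD K Z)" and nonneg: "\<And>i j. 0 \<le> Z $ i $ j"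
    using assms unfolding feas3_def K_def by auto
  have "0 \<le> y \<bullet> y + 2 * (z \<bullet> (X *v y)) + z \<bullet> (Z *v z)" for y z
  proof -
    define s where "s = (\<Sum>r\<in>UNIV. y $ r)"
    have "s\<^sup>2 \<le> K * (y \<bullet> y)"
      using Cauchy_Schwarz_ineq[of "\<chi> _. 1" y] by (simp add: inner_vec_def s_def K_def)
    then have "K * (s / K)\<^sup>2 \<le> y \<bullet> y"
      using K by (simp add: power_divide field_simps power2_eq_square)
    moreover have "X *v y = (s / K) *\<^sub>R diag_vec Z"
      by (simp add: vec_eq_iff matrix_vector_mult_def diag_vec_def X_def s_def sum_distrib_right
          mult.commute flip: sum_divide_distrib)
    ultimately show ?thesis
      using psd_KD[unfolded psd_blockKD_iff[OF sym], rule_format, of "s / K" z]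
      by (simp add: inner_commute)
  qed
  then have "psd (blockIX X Z)"
    using psd_blockIX_iff[OF sym] by blast
  moreover have "Z $ i $ i = (\<Sum>r\<in>UNIV. X $ i $ r)" for i
    using K by (simp add: X_def K_def)
  moreover have "0 \<le> X $ i $ r" for i r
    using K nonneg by (simp add: X_def)
  ultimately have "(Z, X) \<in> feasX E"
    using assms unfolding feasX_def feas3_def by auto
  then show ?thesis unfolding X_def K_def .
qed

lemma fst_image_feasX:
  "fst ` (feasX E :: ((real^'n::finite^'n) \<times> (real^'k::finite^'n)) set) = feas3 E (real CARD('k))"
proof (intro equalityI subsetI)
  fix Z assume "Z \<in> fst ` (feasX E :: ((real^'n^'n) \<times> (real^'k^'n)) set)"
  then obtain X :: "real^'k^'n" where "(Z, X) \<in> feasX E" by auto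
  then show "Z \<in> feas3 E (real CARD('k))" by (rule feasX_imp_feas3)
next
  fix Z assume "Z \<in> feas3 E (real CARD('k))"
  then have "(Z, \<chi> i r. Z $ i $ i / real CARD('k) :: real^'k^'n) \<in> feasX E"
    by (rule feas3_imp_feasX)
  then show "Z \<in> fst ` (feasX E :: ((real^'n^'n) \<times> (real^'k^'n)) set)"
    by (rule image_eqI[rotated]) simp
qed

lemma feas3_strictly_feasible:
  fixes E :: "'n::finite \<Rightarrow> 'n \<Rightarrow> bool"
  assumes irrefl: "\<And>i. \<not> E i i" and K: "K > 0"
  shows "\<exists>Z \<in> feas3 E K. pd (blockKD K Z)"
proof -
  define n where "n = real CARD('n)"
  define e where "e = K / (K + n)"
  define c where "c = K\<^sup>2 / (K + n)"
  define Z :: "real^'n^'n" where "Z = e *\<^sub>R mat 1"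
  have n: "n > 0" unfolding n_def by simp
  have e: "0 < e" "e \<le> 1" unfolding e_def using K n by auto
  have c: "0 < c" "e * n + c = K"
    using K n unfolding c_def e_def
    by (simp_all add: power2_eq_square add_divide_distrib[symmetric] add.commute flip: distrib_left)
  have Z_nth: "Z $ i $ j = (if i = j then e else 0)" for i j
    by (simp add: Z_def mat_def)
  have sym: "transpose Z = Z"
    by (simp add: vec_eq_iff transpose_def Z_nth)
  have form: "K * t\<^sup>2 + 2 * t * (diag_vec Z \<bullet> z) + z \<bullet> (Z *v z)
      = e * (\<Sum>i\<in>UNIV. (z $ i + t)\<^sup>2) + c * t\<^sup>2" for t z
  proof -
    have diag: "diag_vec Z \<bullet> z = e * (\<Sum>i\<in>UNIV. z $ i)"
      by (simp add: inner_vec_def diag_vec_def Z_nth sum_distrib_left)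
    have quad: "z \<bullet> (Z *v z) = e * (\<Sum>i\<in>UNIV. (z $ i)\<^sup>2)"
      by (simp add: Z_def inner_vec_def power2_eq_square sum_distrib_left mult_ac
          flip: matrix_scaleR_vector_ac)
    have squares: "(\<Sum>i\<in>UNIV. (z $ i + t)\<^sup>2)
        = (\<Sum>i\<in>UNIV. (z $ i)\<^sup>2) + 2 * t * (\<Sum>i\<in>UNIV. z $ i) + n * t\<^sup>2"
      by (simp add: power2_sum sum.distrib sum_distrib_left n_def mult_ac)
    show ?thesis
      unfolding diag quad squares c(2)[symmetric] by (simp add: algebra_simps)
  qed
  have "0 < K * t\<^sup>2 + 2 * t * (diag_vec Z \<bullet> z) + z \<bullet> (Z *v z)" if "t \<noteq> 0 \<or> z \<noteq> 0" for t z
  proof (cases "t = 0")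
    case True
    then have "0 < e * (z \<bullet> z)"
      using that e by simp
    moreover have "z \<bullet> z = (\<Sum>i\<in>UNIV. (z $ i + t)\<^sup>2)"
      using True by (simp add: inner_vec_def power2_eq_square)
    ultimately show ?thesis
      unfolding form using True by simp
  next
    case False
    have "0 \<le> e * (\<Sum>i\<in>UNIV. (z $ i + t)\<^sup>2)"
      using e by (simp add: sum_nonneg)
    moreover have "0 < c * t\<^sup>2"
      using False c by simp
    ultimately show ?thesis by (simp add: form)
  qed
  then have "pd (blockKD K Z)"
    using pd_blockKD_iff[OF sym] by blast
  moreover have "Z \<in> feas3 E K"
    using sym pd_imp_psd[OF calculation] irrefl e unfolding feas3_def by (auto simp: Z_nth)
  ultimately show ?thesis by blast
qed

theorem theorem5:
  fixes E :: "'n::finite \<Rightarrow> 'n \<Rightarrow> bool"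
  assumes "\<And>i j. E i j \<Longrightarrow> E j i"
    and "\<And>i. \<not> E i i"
  shows "optX E TYPE('k::finite) = theta3 E (real CARD('k))
         \<and> (\<exists>Z \<in> feas3 E (real CARD('k)). pd (blockKD (real CARD('k)) Z))"
proof
  have "(\<lambda>(Z, X :: real^'k^'n). trace Z) ` feasX E
      = trace ` fst ` (feasX E :: ((real^'n^'n) \<times> (real^'k^'n)) set)"
    by (simp add: image_image case_prod_beta)
  then show "optX E TYPE('k) = theta3 E (real CARD('k))"
    unfolding optX_def theta3_def fst_image_feasX by simp
  show "\<exists>Z \<in> feas3 E (real CARD('k)). pd (blockKD (real CARD('k)) Z)"
    using assms(2) by (intro feas3_strictly_feasible) simp_all
qed

end
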